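(* Consider the two-unicast wireline network ("butterfly network 1") with nodes $\mathsf{S}_1,\mathsf{S}_2,\mathsf{M}_1,\mathsf{M}_2,\mathsf{D}_1,\mathsf{D}_2$ and seven directed edges: edge 1 from $\mathsf{S}_1$ to $\mathsf{M}_1$, edge 2 from $\mathsf{S}_2$ to $\mathsf{M}_1$, edge 3 from $\mathsf{M}_1$ to $\mathsf{M}_2$, edge 4 from $\mathsf{S}_1$ to $\mathsf{D}_2$, edge 5 from $\mathsf{S}_2$ to $\mathsf{D}_1$, edge 6 from $\mathsf{M}_2$ to $\mathsf{D}_2$, edge 7 from $\mathsf{M}_2$ to $\mathsf{D}_1$, where edge $i$ has capacity $\mathsf{C}_i\ge 0$. Then every nonnegative rate pair $(R_1,R_2)$ satisfying $$R_1\le \min\{\mathsf{C}_1,\mathsf{C}_7\},\quad R_2\le \min\{\mathsf{C}_2,\mathsf{C}_6\},$$ $$R_1+R_2\le \mathsf{C}_3+\min\{R_2,\mathsf{C}_4,\mathsf{C}_5\},\quad R_1+R_2\le \mathsf{C}_3+\min\{R_1,\mathsf{C}_4,\mathsf{C}_5\}$$ is achievable (without security constraints).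
   Context: Network model: a directed acyclic graph; each edge $e$ is a noiseless orthogonal channel of capacity $\mathsf{C}_e$, carrying symbols from $\mathbb{F}_q$ (over $n$ channel uses edge $e$ carries a word $X_e^n$ of at most $n\mathsf{C}_e$ $q$-ary symbols' worth of information; received $Y_e^n=X_e^n$). Source $\mathsf{S}_i$ ($i=1,2$) has a message $W_i$, uniform, with $q$-ary entropy $nR_i$, $W_1,W_2$ independent; $W_i$ must be decoded at $\mathsf{D}_i$. A rate pair $(R_1,R_2)$ is achievable if for some block length $n$ there are encoding functions for every edge—an edge leaving $\mathsf{S}_i$ carries a function of $W_i$ only, and any other edge carries a function of the symbols received on the incoming edges of its tail node—and decoding functions $\phi_j$ applied to the symbols received on the incoming edges of $\mathsf{D}_j$ such that $\mathsf{D}_j$ recovers $W_j$ with vanishing error probability, $j=1,2$. *)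

theory Defs
  imports Complex_Main "HOL-Computational_Algebra.Primes"
begin

text \<open>Capacities C e (e = 1..7), measured in q-ary symbols
 per channel use.  A block-length-n code: message sets {..<M1}, {..<M2};
 edge e carries a symbol from {..<L e} with L e \<le> q^(n C e);
 x1,x4 are functions of W1; x2,x5 of W2; x3 of (x1,x2); x6,x7 of x3;
 D1 decodes from (x5,x7), D2 from (x4,x6).\<close>

definition bf1_code ::
  "nat \<Rightarrow> nat \<Rightarrow> (nat \<Rightarrow> real) \<Rightarrow> nat \<Rightarrow> nat \<Rightarrow>
   (nat \<Rightarrow> nat) \<Rightarrow> (nat \<Rightarrow> nat) \<Rightarrow> (nat \<Rightarrow> nat \<Rightarrow> nat) \<Rightarrow>
   (nat \<Rightarrow> nat) \<Rightarrow> (nat \<Rightarrow> nat) \<Rightarrow> (nat \<Rightarrow> nat) \<Rightarrow> (nat \<Rightarrow> nat) \<Rightarrow> bool" where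
  "bf1_code q n C M1 M2 x1 x2 x3 x4 x5 x6 x7 \<longleftrightarrow>
     (\<exists>L :: nat \<Rightarrow> nat.
        (\<forall>e\<in>{1..7}. real (L e) \<le> real q powr (real n * C e)) \<and>
        (\<forall>w1<M1. x1 w1 < L 1 \<and> x4 w1 < L 4) \<and>
        (\<forall>w2<M2. x2 w2 < L 2 \<and> x5 w2 < L 5) \<and>
        (\<forall>a<L 1. \<forall>b<L 2. x3 a b < L 3) \<and>
        (\<forall>c<L 3. x6 c < L 6 \<and> x7 c < L 7))"

definition bf1_err1 ::
  "nat \<Rightarrow> nat \<Rightarrow> (nat \<Rightarrow> nat) \<Rightarrow> (nat \<Rightarrow> nat) \<Rightarrow> (nat \<Rightarrow> nat \<Rightarrow> nat) \<Rightarrow>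
   (nat \<Rightarrow> nat) \<Rightarrow> (nat \<Rightarrow> nat) \<Rightarrow> (nat \<Rightarrow> nat \<Rightarrow> nat) \<Rightarrow> nat" where
  "bf1_err1 M1 M2 x1 x2 x3 x5 x7 \<phi>1 =
     card {(w1, w2). w1 < M1 \<and> w2 < M2 \<and> \<phi>1 (x5 w2) (x7 (x3 (x1 w1) (x2 w2))) \<noteq> w1}"

definition bf1_err2 ::
  "nat \<Rightarrow> nat \<Rightarrow> (nat \<Rightarrow> nat) \<Rightarrow> (nat \<Rightarrow> nat) \<Rightarrow> (nat \<Rightarrow> nat \<Rightarrow> nat) \<Rightarrow>
   (nat \<Rightarrow> nat) \<Rightarrow> (nat \<Rightarrow> nat) \<Rightarrow> (nat \<Rightarrow> nat \<Rightarrow> nat) \<Rightarrow> nat" where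
  "bf1_err2 M1 M2 x1 x2 x3 x4 x6 \<phi>2 =
     card {(w1, w2). w1 < M1 \<and> w2 < M2 \<and> \<phi>2 (x4 w1) (x6 (x3 (x1 w1) (x2 w2))) \<noteq> w2}"

text \<open>(R1,R2) achievable: for every \<epsilon> > 0 there is a block length n and a code
 with at least q^(n(R_i - \<epsilon>)) messages for source i and error probability
 at most \<epsilon> at each destination (messages uniform and independent).\<close>
definition bf1_achievable :: "nat \<Rightarrow> (nat \<Rightarrow> real) \<Rightarrow> real \<Rightarrow> real \<Rightarrow> bool" where
  "bf1_achievable q C R1 R2 \<longleftrightarrow>
     (\<forall>\<epsilon>>0. \<exists>n>0. \<exists>M1 M2 x1 x2 x3 x4 x5 x6 x7 \<phi>1 \<phi>2.
        bf1_code q n C M1 M2 x1 x2 x3 x4 x5 x6 x7 \<and>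
        real M1 \<ge> real q powr (real n * (R1 - \<epsilon>)) \<and>
        real M2 \<ge> real q powr (real n * (R2 - \<epsilon>)) \<and>
        real (bf1_err1 M1 M2 x1 x2 x3 x5 x7 \<phi>1) \<le> \<epsilon> * real (M1 * M2) \<and>
        real (bf1_err2 M1 M2 x1 x2 x3 x4 x6 \<phi>2) \<le> \<epsilon> * real (M1 * M2))"

end

theory Submission
  imports Defs
begin

text \<open>Split each message into a common part of size A, carried at rate m, and a private part.
  The middle edge carries the sum of the two common parts modulo A together with both private
  parts; each destination learns the other source's common part from its side edge, subtracts it
  from the sum, and reads its own private part off the middle path. This is zero-error whenever
  the sizes fit the capacities, and rounding the sizes down to integers costs at most a factor 4
  in the message counts, which a slack \<epsilon> absorbs for large n.\<close>

lemma mixed_radix_less: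
  fixes u v A K :: nat
  assumes "u < A" and "v < K"
  shows "u + A * v < A * K"
proof -
  have "u + A * v < A * Suc v" using assms(1) by simp
  also have "\<dots> \<le> A * K" using assms(2) by (intro mult_le_mono2) simp
  finally show ?thesis .
qed

lemma mod_add_sub_eq:
  fixes a b A :: nat
  assumes "b < A"
  shows "((a + b) mod A + A - b) mod A = a mod A"
proof -
  have "(a + b) mod A + A - b = (a + b) mod A + (A - b)" using assms by simp
  then have "((a + b) mod A + A - b) mod A = (a + b + (A - b)) mod A"
    by (simp add: mod_add_left_eq)
  also have "\<dots> = (a + A) mod A" using assms by simp
  finally show ?thesis by simp
qed

lemma nat_between_half_and:
  fixes x :: real
  assumes "x \<ge> 1"
  obtains N :: nat where "N > 0" and "real N \<le> x" and "x / 2 \<le> real N"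
proof
  have floor: "real_of_int \<lfloor>x\<rfloor> \<le> x" "x < real_of_int \<lfloor>x\<rfloor> + 1" "\<lfloor>x\<rfloor> \<ge> 1"
    using assms by linarith+
  then have "real (nat \<lfloor>x\<rfloor>) = real_of_int \<lfloor>x\<rfloor>" by simp
  with floor show "nat \<lfloor>x\<rfloor> > 0" "real (nat \<lfloor>x\<rfloor>) \<le> x" "x / 2 \<le> real (nat \<lfloor>x\<rfloor>)"
    by linarith+
qed

text \<open>A message w < A * B is read as the pair (w mod A, w div A) of its common and private parts.\<close>

definition bf1_mix :: "nat \<Rightarrow> nat \<Rightarrow> nat \<Rightarrow> nat \<Rightarrow> nat" where
  "bf1_mix A B1 w1 w2 = (w1 mod A + w2 mod A) mod A + A * (w1 div A + B1 * (w2 div A))"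

definition bf1_to_D1 :: "nat \<Rightarrow> nat \<Rightarrow> nat \<Rightarrow> nat" where
  "bf1_to_D1 A B1 c = c mod A + A * (c div A mod B1)"

definition bf1_to_D2 :: "nat \<Rightarrow> nat \<Rightarrow> nat \<Rightarrow> nat" where
  "bf1_to_D2 A B1 c = c mod A + A * (c div A div B1)"

text \<open>Adding A before subtracting u < A avoids truncated subtraction on nat.\<close>

definition bf1_unmix :: "nat \<Rightarrow> nat \<Rightarrow> nat \<Rightarrow> nat" where
  "bf1_unmix A u c = (c mod A + A - u) mod A + A * (c div A)"

lemma bf1_mix_less:
  assumes "w1 < A * B1" and "w2 < A * B2"
  shows "bf1_mix A B1 w1 w2 < A * B1 * B2"
proof -
  have "w1 div A < B1" and "w2 div A < B2"
    using assms by (simp_all add: less_mult_imp_div_less mult.commute)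
  then have "w1 div A + B1 * (w2 div A) < B1 * B2" by (rule mixed_radix_less)
  moreover have "A > 0" using assms(1) by (cases A) auto
  ultimately show ?thesis
    unfolding bf1_mix_def mult.assoc by (simp add: mixed_radix_less)
qed

lemma bf1_to_D1_less:
  assumes "A > 0" and "B1 > 0"
  shows "bf1_to_D1 A B1 c < A * B1"
  unfolding bf1_to_D1_def using assms by (intro mixed_radix_less) simp_all

lemma bf1_to_D2_less:
  assumes "c < A * B1 * B2"
  shows "bf1_to_D2 A B1 c < A * B2"
proof -
  have "c div A < B1 * B2"
    using assms by (metis less_mult_imp_div_less mult.assoc mult.commute)
  then have "c div A div B1 < B2"
    by (metis less_mult_imp_div_less mult.commute)
  moreover have "A > 0" using assms by (cases A) auto
  ultimately show ?thesis unfolding bf1_to_D2_def by (intro mixed_radix_less) simp_all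
qed

lemma bf1_mix_mod_div:
  assumes "w1 < A * B1"
  shows "bf1_mix A B1 w1 w2 mod A = (w1 mod A + w2 mod A) mod A"
    and "bf1_mix A B1 w1 w2 div A = w1 div A + B1 * (w2 div A)"
proof -
  have "A > 0" using assms by (cases A) auto
  then show "bf1_mix A B1 w1 w2 mod A = (w1 mod A + w2 mod A) mod A"
    and "bf1_mix A B1 w1 w2 div A = w1 div A + B1 * (w2 div A)"
    by (simp_all add: bf1_mix_def)
qed

lemma bf1_decode_D1:
  assumes "w1 < A * B1"
  shows "bf1_unmix A (w2 mod A) (bf1_to_D1 A B1 (bf1_mix A B1 w1 w2)) = w1"
proof -
  have "w1 div A < B1" using assms by (simp add: less_mult_imp_div_less mult.commute)
  moreover have "A > 0" using assms by (cases A) auto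
  ultimately show ?thesis
    using mod_add_sub_eq[of "w2 mod A" A "w1 mod A"]
    by (simp add: bf1_unmix_def bf1_to_D1_def bf1_mix_mod_div[OF assms])
qed

lemma bf1_decode_D2:
  assumes "w1 < A * B1"
  shows "bf1_unmix A (w1 mod A) (bf1_to_D2 A B1 (bf1_mix A B1 w1 w2)) = w2"
proof -
  have "w1 div A < B1" using assms by (simp add: less_mult_imp_div_less mult.commute)
  moreover have "A > 0" using assms by (cases A) auto
  ultimately show ?thesis
    using mod_add_sub_eq[of "w1 mod A" A "w2 mod A"]
    by (simp add: bf1_unmix_def bf1_to_D2_def bf1_mix_mod_div[OF assms] add.commute)
qed

lemma bf1_code_mixing:
  assumes "A > 0" and "B1 > 0" and "B2 > 0"
    and "real (A * B1) \<le> real q powr (real n * C 1)"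
    and "real (A * B2) \<le> real q powr (real n * C 2)"
    and "real (A * B1 * B2) \<le> real q powr (real n * C 3)"
    and "real A \<le> real q powr (real n * C 4)"
    and "real A \<le> real q powr (real n * C 5)"
    and "real (A * B2) \<le> real q powr (real n * C 6)"
    and "real (A * B1) \<le> real q powr (real n * C 7)"
  shows "bf1_code q n C (A * B1) (A * B2) id id (bf1_mix A B1) (\<lambda>w. w mod A) (\<lambda>w. w mod A)
           (bf1_to_D2 A B1) (bf1_to_D1 A B1)"
  unfolding bf1_code_def
proof (intro exI conjI)
  let ?L = "\<lambda>e. [0, A * B1, A * B2, A * B1 * B2, A, A, A * B2, A * B1] ! e"
  show "\<forall>e\<in>{1..7}. real (?L e) \<le> real q powr (real n * C e)"
  proof
    fix e :: nat
    assume "e \<in> {1..7}"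
    then have "e \<in> {1, 2, 3, 4, 5, 6, 7}" by auto
    then show "real (?L e) \<le> real q powr (real n * C e)"
      using assms(4-) by (auto simp: numeral_eq_Suc)
  qed
qed (use assms in \<open>auto simp: numeral_eq_Suc bf1_mix_less bf1_to_D1_less bf1_to_D2_less\<close>)

lemma bf1_err1_mixing:
  "bf1_err1 (A * B1) (A * B2) id id (bf1_mix A B1) (\<lambda>w. w mod A) (bf1_to_D1 A B1) (bf1_unmix A) = 0"
proof -
  have "{(w1, w2). w1 < A * B1 \<and> w2 < A * B2 \<and>
      bf1_unmix A (w2 mod A) (bf1_to_D1 A B1 (bf1_mix A B1 w1 w2)) \<noteq> w1} = {}"
    by (auto simp: bf1_decode_D1)
  then show ?thesis unfolding bf1_err1_def id_apply by (simp only: card.empty)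
qed

lemma bf1_err2_mixing:
  "bf1_err2 (A * B1) (A * B2) id id (bf1_mix A B1) (\<lambda>w. w mod A) (bf1_to_D2 A B1) (bf1_unmix A) = 0"
proof -
  have "{(w1, w2). w1 < A * B1 \<and> w2 < A * B2 \<and>
      bf1_unmix A (w1 mod A) (bf1_to_D2 A B1 (bf1_mix A B1 w1 w2)) \<noteq> w2} = {}"
    by (auto simp: bf1_decode_D2)
  then show ?thesis unfolding bf1_err2_def id_apply by (simp only: card.empty)
qed

lemma bf1_zero_error_code:
  fixes q n :: nat and C :: "nat \<Rightarrow> real" and R1 R2 m :: real
  assumes "q \<ge> 1"
    and "0 \<le> m" and "m \<le> R1" and "m \<le> R2"
    and "R1 \<le> C 1" and "R2 \<le> C 2" and "R1 + R2 - m \<le> C 3" and "m \<le> C 4" and "m \<le> C 5"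
    and "R2 \<le> C 6" and "R1 \<le> C 7"
  shows "\<exists>M1 M2 x1 x2 x3 x4 x5 x6 x7 \<phi>1 \<phi>2.
           bf1_code q n C M1 M2 x1 x2 x3 x4 x5 x6 x7 \<and>
           real q powr (real n * R1) / 4 \<le> real M1 \<and>
           real q powr (real n * R2) / 4 \<le> real M2 \<and>
           bf1_err1 M1 M2 x1 x2 x3 x5 x7 \<phi>1 = 0 \<and>
           bf1_err2 M1 M2 x1 x2 x3 x4 x6 \<phi>2 = 0"
proof -
  define P where "P x = real q powr (real n * x)" for x
  have P_add: "P (x + y) = P x * P y" for x y
    unfolding P_def by (simp add: distrib_left powr_add)
  have P_mono: "P x \<le> P y" if "x \<le> y" for x y
    unfolding P_def using assms(1) that by (intro powr_mono mult_left_mono) auto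
  have P_ge_1: "P x \<ge> 1" if "x \<ge> 0" for x
    using P_mono[OF that] assms(1) by (simp add: P_def)
  obtain A where A: "A > 0" "real A \<le> P m" "P m / 2 \<le> real A"
    using nat_between_half_and[OF P_ge_1] assms(2) by blast
  obtain B1 where B1: "B1 > 0" "real B1 \<le> P (R1 - m)" "P (R1 - m) / 2 \<le> real B1"
    using nat_between_half_and[OF P_ge_1] assms(3) by (metis diff_ge_0_iff_ge)
  obtain B2 where B2: "B2 > 0" "real B2 \<le> P (R2 - m)" "P (R2 - m) / 2 \<le> real B2"
    using nat_between_half_and[OF P_ge_1] assms(4) by (metis diff_ge_0_iff_ge)
  have P_R1: "P R1 = P m * P (R1 - m)" and P_R2: "P R2 = P m * P (R2 - m)"
    using P_add[of m "R1 - m"] P_add[of m "R2 - m"] by simp_all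
  have P_R12: "P (R1 + R2 - m) = P R1 * P (R2 - m)"
    using P_add[of R1 "R2 - m"] by (simp add: add_diff_eq)
  have AB1: "real (A * B1) \<le> P R1" "P R1 / 4 \<le> real (A * B1)"
    using mult_mono[OF A(2) B1(2)] mult_mono[OF A(3) B1(3)] A B1 unfolding P_R1 by simp_all
  have AB2: "real (A * B2) \<le> P R2" "P R2 / 4 \<le> real (A * B2)"
    using mult_mono[OF A(2) B2(2)] mult_mono[OF A(3) B2(3)] A B2 unfolding P_R2 by simp_all
  have AB1B2: "real (A * B1 * B2) \<le> P (R1 + R2 - m)"
    using mult_mono[OF AB1(1) B2(2)] P_ge_1[of R1] assms(2,3) unfolding P_R12 by simp
  have "real (A * B1) \<le> P (C 1)" "real (A * B2) \<le> P (C 2)" "real (A * B1 * B2) \<le> P (C 3)"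
    "real A \<le> P (C 4)" "real A \<le> P (C 5)" "real (A * B2) \<le> P (C 6)" "real (A * B1) \<le> P (C 7)"
    using AB1(1) AB2(1) AB1B2 A(2) P_mono[OF assms(5)] P_mono[OF assms(6)] P_mono[OF assms(7)]
      P_mono[OF assms(8)] P_mono[OF assms(9)] P_mono[OF assms(10)] P_mono[OF assms(11)]
    by linarith+
  then have "bf1_code q n C (A * B1) (A * B2) id id (bf1_mix A B1) (\<lambda>w. w mod A) (\<lambda>w. w mod A)
      (bf1_to_D2 A B1) (bf1_to_D1 A B1)"
    using A(1) B1(1) B2(1) unfolding P_def by (intro bf1_code_mixing)
  with AB1 AB2 bf1_err1_mixing bf1_err2_mixing show ?thesis
    unfolding P_def by blast
qed

lemma blocklength_absorbing_factor_4:
  fixes q :: nat and \<epsilon> :: real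
  assumes "q \<ge> 2" and "\<epsilon> > 0"
  obtains n :: nat where "n > 0"
    and "\<And>R. real q powr (real n * (R - \<epsilon>)) \<le> real q powr (real n * R) / 4"
proof
  define n where "n = nat \<lceil>2 / \<epsilon>\<rceil> + 1"
  show "n > 0" by (simp add: n_def)
  have "real n \<ge> 2 / \<epsilon>" unfolding n_def by linarith
  then have "real n * \<epsilon> \<ge> 2" using assms(2) by (simp add: field_simps)
  then have "real q powr (real n * \<epsilon>) \<ge> real q powr 2"
    using assms(1) by (intro powr_mono) auto
  moreover have "real q powr 2 \<ge> 4"
    using assms(1) power_mono[of 2 "real q" 2] by (simp add: powr_realpow)
  ultimately have slack: "real q powr (real n * \<epsilon>) \<ge> 4" by linarith
  fix R
  have "real q powr (real n * R) = real q powr (real n * (R - \<epsilon>)) * real q powr (real n * \<epsilon>)"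
    by (simp add: powr_add [symmetric] algebra_simps)
  moreover have "real q powr (real n * (R - \<epsilon>)) * 4
      \<le> real q powr (real n * (R - \<epsilon>)) * real q powr (real n * \<epsilon>)"
    using slack by (intro mult_left_mono) auto
  ultimately show "real q powr (real n * (R - \<epsilon>)) \<le> real q powr (real n * R) / 4"
    by simp
qed

lemma prime_power_ge_2:
  fixes q :: nat
  assumes "\<exists>p k. prime p \<and> k > 0 \<and> q = p ^ k"
  shows "q \<ge> 2"
proof -
  obtain p k where "prime p" "k > 0" "q = p ^ k" using assms by blast
  moreover have "p \<le> p ^ k" using \<open>k > 0\<close> prime_gt_1_nat[OF \<open>prime p\<close>] by (intro self_le_power) auto
  ultimately show ?thesis using prime_ge_2_nat[of p] by linarith
qed

lemma bf1_achievable_if_zero_error_codes: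
  fixes q :: nat and C :: "nat \<Rightarrow> real" and R1 R2 :: real
  assumes "q \<ge> 2"
    and codes: "\<And>n. \<exists>M1 M2 x1 x2 x3 x4 x5 x6 x7 \<phi>1 \<phi>2.
           bf1_code q n C M1 M2 x1 x2 x3 x4 x5 x6 x7 \<and>
           real q powr (real n * R1) / 4 \<le> real M1 \<and>
           real q powr (real n * R2) / 4 \<le> real M2 \<and>
           bf1_err1 M1 M2 x1 x2 x3 x5 x7 \<phi>1 = 0 \<and>
           bf1_err2 M1 M2 x1 x2 x3 x4 x6 \<phi>2 = 0"
  shows "bf1_achievable q C R1 R2"
  unfolding bf1_achievable_def
proof (intro allI impI)
  fix \<epsilon> :: real
  assume "\<epsilon> > 0"
  then obtain n :: nat where "n > 0"
    and slack: "\<And>R. real q powr (real n * (R - \<epsilon>)) \<le> real q powr (real n * R) / 4"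
    using blocklength_absorbing_factor_4[OF assms(1)] by metis
  obtain M1 M2 x1 x2 x3 x4 x5 x6 x7 \<phi>1 \<phi>2 where
      code: "bf1_code q n C M1 M2 x1 x2 x3 x4 x5 x6 x7"
      and "real q powr (real n * R1) / 4 \<le> real M1" "real q powr (real n * R2) / 4 \<le> real M2"
      and err: "bf1_err1 M1 M2 x1 x2 x3 x5 x7 \<phi>1 = 0" "bf1_err2 M1 M2 x1 x2 x3 x4 x6 \<phi>2 = 0"
    using codes[of n] by blast
  then have "real M1 \<ge> real q powr (real n * (R1 - \<epsilon>))" "real M2 \<ge> real q powr (real n * (R2 - \<epsilon>))"
    using slack[of R1] slack[of R2] by linarith+
  moreover have "real (bf1_err1 M1 M2 x1 x2 x3 x5 x7 \<phi>1) \<le> \<epsilon> * real (M1 * M2)"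
    and "real (bf1_err2 M1 M2 x1 x2 x3 x4 x6 \<phi>2) \<le> \<epsilon> * real (M1 * M2)"
    using err \<open>\<epsilon> > 0\<close> by simp_all
  ultimately show "\<exists>n>0. \<exists>M1 M2 x1 x2 x3 x4 x5 x6 x7 \<phi>1 \<phi>2.
        bf1_code q n C M1 M2 x1 x2 x3 x4 x5 x6 x7 \<and>
        real M1 \<ge> real q powr (real n * (R1 - \<epsilon>)) \<and>
        real M2 \<ge> real q powr (real n * (R2 - \<epsilon>)) \<and>
        real (bf1_err1 M1 M2 x1 x2 x3 x5 x7 \<phi>1) \<le> \<epsilon> * real (M1 * M2) \<and>
        real (bf1_err2 M1 M2 x1 x2 x3 x4 x6 \<phi>2) \<le> \<epsilon> * real (M1 * M2)"
    using \<open>n > 0\<close> code by (intro exI conjI) assumption+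
qed

theorem theorem1:
  fixes q :: nat and C :: "nat \<Rightarrow> real" and R1 R2 :: real
  assumes "\<exists>p k. prime p \<and> k > 0 \<and> q = p ^ k"
    and "\<forall>e\<in>{1..7}. C e \<ge> 0"
    and "R1 \<ge> 0" and "R2 \<ge> 0"
    and "R1 \<le> min (C 1) (C 7)"
    and "R2 \<le> min (C 2) (C 6)"
    and "R1 + R2 \<le> C 3 + min R2 (min (C 4) (C 5))"
    and "R1 + R2 \<le> C 3 + min R1 (min (C 4) (C 5))"
  shows "bf1_achievable q C R1 R2"
proof -
  have q: "q \<ge> 2" using assms(1) by (rule prime_power_ge_2)
  define m where "m = min (min R1 R2) (min (C 4) (C 5))"
  have "0 \<le> m" "m \<le> R1" "m \<le> R2" "m \<le> C 4" "m \<le> C 5"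
    using assms(2-4) by (auto simp: m_def)
  moreover have "R1 + R2 - m \<le> C 3"
    using assms(7,8) by (auto simp: m_def min_def)
  moreover have "q \<ge> 1" "R1 \<le> C 1" "R1 \<le> C 7" "R2 \<le> C 2" "R2 \<le> C 6"
    using q assms(5,6) by simp_all
  ultimately show ?thesis
    using q by (intro bf1_achievable_if_zero_error_codes bf1_zero_error_code)
qed

end
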